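(* Let $t\ge1$ be an integer. The midpoint $Q$ of the edge of $P_t$ of slope $1$ has coordinates $(H_t,H_t/2)$; in particular the segment from the origin $O$ to $Q$ has slope $\tfrac12$. Moreover, $H_t$ is even if and only if $t$ is even.
   Context: Fix an integer $t\ge1$. Let $S_t$ be the set of rational numbers $s$ which, written in lowest terms as $s=a/b$ with $a\in\mathbb Z$ and $b$ a positive integer, satisfy $b\le t$. For $s=a/b\in S_t$ let $v_s=\lfloor t/b\rfloor\,(b,a)$, and $V_t=\{v_s:s\in S_t\}$. The grid parabola $P_t$ is the infinite convex polygonal chain obtained by concatenating the vectors of $V_t$ in order of increasing slope, positioned so that the edge given by $(t,0)$ goes from $(-t/2,0)$ to $(t/2,0)$. The horizontal period is $H_t=\sum_{(x,y)\in V_t,\ 0<y/x\le1} x=\sum_{1\le y\le x\le t,\ \gcd(x,y)=1}\lfloor t/x\rfloor\,x$. *)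

theory Defs
  imports "HOL-Analysis.Analysis"
begin

definition S_set :: "nat \<Rightarrow> rat set" where
  "S_set t = {s. snd (quotient_of s) \<le> int t}"

definition vvec :: "nat \<Rightarrow> rat \<Rightarrow> real \<times> real" where
  "vvec t s = (case quotient_of s of (a, b) \<Rightarrow>
      (real_of_int ((int t div b) * b), real_of_int ((int t div b) * a)))"

text \<open>Starting vertex of the edge of the grid parabola P_t with slope s:
  the edges are the vectors v_s concatenated in order of increasing slope,
  with the edge of slope 0 (vector (t,0)) going from (-t/2,0) to (t/2,0).\<close>
definition edge_start :: "nat \<Rightarrow> rat \<Rightarrow> real \<times> real" where
  "edge_start t s =
     (if 0 \<le> s then (- real t / 2, 0) + (\<Sum>s'\<in>S_set t \<inter> {0..<s}. vvec t s')
      else (- real t / 2, 0) - (\<Sum>s'\<in>S_set t \<inter> {s..<0}. vvec t s'))"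

definition edge_end :: "nat \<Rightarrow> rat \<Rightarrow> real \<times> real" where
  "edge_end t s = edge_start t s + vvec t s"

definition edge_midpoint :: "nat \<Rightarrow> rat \<Rightarrow> real \<times> real" where
  "edge_midpoint t s = midpoint (edge_start t s) (edge_end t s)"

definition H :: "nat \<Rightarrow> nat" where
  "H t = (\<Sum>(x, y) \<in> {(x, y). 1 \<le> y \<and> y \<le> x \<and> x \<le> t \<and> coprime x y}. (t div x) * x)"

end

theory Submission
  imports Defs
begin

text \<open>The edges of slopes in [0,1) are the vectors v_{a/b} for the reduced fractions
  0 \<le> a/b < 1 with b \<le> t; their horizontal parts add up to H_t and, by the reflection
  a/b \<mapsto> 1 - a/b, their vertical parts add up to (H_t - t)/2. Adding half of the edge
  v_1 = (t,t) to the starting point (-t/2, 0) gives the midpoint (H_t, H_t/2), and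
  H_t = t + 2 \<cdot> (vertical sum) has the parity of t.\<close>

definition farey_pairs :: "nat \<Rightarrow> (int \<times> int) set" where
  "farey_pairs t = {(a, b). 0 \<le> a \<and> a < b \<and> b \<le> int t \<and> coprime a b}"

lemma finite_farey_pairs: "finite (farey_pairs t)"
  by (rule finite_subset[of _ "{0..int t} \<times> {0..int t}"]) (auto simp: farey_pairs_def)

lemma sum_S_set_unit_interval:
  "(\<Sum>s\<in>S_set t \<inter> {0..<1}. g (quotient_of s)) = (\<Sum>p\<in>farey_pairs t. g p)"
proof (rule sum.reindex_bij_witness[of _ "\<lambda>(a, b). Fract a b" quotient_of])
  fix s assume s: "s \<in> S_set t \<inter> {0..<1}"
  obtain a b where q: "quotient_of s = (a, b)" by force
  then have "s = Fract a b" "b > 0" "coprime a b"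
    using Fract_quotient_of[of s] by (simp_all add: quotient_of_denom_pos quotient_of_coprime)
  moreover have "b \<le> int t" using s q by (simp add: S_set_def)
  ultimately show "quotient_of s \<in> farey_pairs t"
    using s q by (auto simp: farey_pairs_def zero_le_Fract_iff Fract_less_one_iff)
  show "(case quotient_of s of (a, b) \<Rightarrow> Fract a b) = s"
    using q \<open>s = Fract a b\<close> by simp
next
  fix p assume "p \<in> farey_pairs t"
  then obtain a b where p: "p = (a, b)" "0 \<le> a" "a < b" "b \<le> int t" "coprime a b"
    by (auto simp: farey_pairs_def)
  then have "quotient_of (Fract a b) = (a, b)" by (simp add: quotient_of_Fract)
  with p show "quotient_of (case p of (a, b) \<Rightarrow> Fract a b) = p"
    and "(case p of (a, b) \<Rightarrow> Fract a b) \<in> S_set t \<inter> {0..<1}"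
    by (simp_all add: S_set_def zero_le_Fract_iff Fract_less_one_iff)
qed (rule refl)

lemma coprime_diff_left_iff: "coprime (b - a) b \<longleftrightarrow> coprime a (b :: 'a :: ring_gcd)"
  by (simp add: coprime_iff_gcd_eq_1 gcd_diff2)

lemma H_eq_sum_farey_pairs: "int (H t) = (\<Sum>(a, b)\<in>farey_pairs t. (int t div b) * b)"
proof -
  let ?Q = "{(x, y). 1 \<le> y \<and> y \<le> x \<and> x \<le> t \<and> coprime x y}"
  have "int (H t) = (\<Sum>(x, y)\<in>?Q. (int t div int x) * int x)"
    by (simp add: H_def of_nat_sum case_prod_beta zdiv_int)
  also have "\<dots> = (\<Sum>(a, b)\<in>farey_pairs t. (int t div b) * b)"
    \<comment> \<open>the pair (x, y) of H_t corresponds to the fraction 1 - y/x \<in> [0, 1)\<close>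
  proof (rule sum.reindex_bij_witness[of _ "\<lambda>(a, b). (nat b, nat (b - a))"
        "\<lambda>(x, y). (int x - int y, int x)"])
    fix q assume "q \<in> ?Q"
    then obtain x y where q: "q = (x, y)" "1 \<le> y" "y \<le> x" "x \<le> t" "coprime x y" by auto
    then have "coprime (int x - int y) (int x)"
      using coprime_diff_left_iff[of "int x" "int y"] by (simp add: coprime_commute)
    moreover have "y = x \<Longrightarrow> x = 1" using q by simp
    ultimately show "(case q of (x, y) \<Rightarrow> (int x - int y, int x)) \<in> farey_pairs t"
      using q by (auto simp: farey_pairs_def)
  next
    fix p assume "p \<in> farey_pairs t"
    then obtain a b where p: "p = (a, b)" "0 \<le> a" "a < b" "b \<le> int t" "coprime a b"
      by (auto simp: farey_pairs_def)
    then have "coprime b (b - a)"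
      using coprime_diff_left_iff[of b a] by (simp add: coprime_commute)
    then have "coprime (nat b) (nat (b - a))"
      using p by (simp flip: coprime_int_iff)
    then show "(case p of (a, b) \<Rightarrow> (nat b, nat (b - a))) \<in> ?Q"
      using p by auto
  qed (auto simp: farey_pairs_def)
  finally show ?thesis .
qed

lemma farey_reflect_mem:
  assumes "p \<in> farey_pairs t - {(0, 1)}"
  shows "(snd p - fst p, snd p) \<in> farey_pairs t - {(0, 1)}"
proof -
  obtain a b where "p = (a, b)" by force
  moreover have "a \<noteq> 0" using assms calculation by (auto simp: farey_pairs_def)
  ultimately show ?thesis using assms by (auto simp: farey_pairs_def coprime_diff_left_iff)
qed

lemma sum_farey_pairs_reflect:
  "(\<Sum>(a, b)\<in>farey_pairs t - {(0, 1)}. f a b) = (\<Sum>(a, b)\<in>farey_pairs t - {(0, 1)}. f (b - a) b)"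
  by (rule sum.reindex_bij_witness[of _ "\<lambda>p. (snd p - fst p, snd p)" "\<lambda>p. (snd p - fst p, snd p)"])
     (simp_all add: farey_reflect_mem case_prod_beta del: Diff_iff)

lemma double_vertical_sum:
  assumes "t \<ge> 1"
  shows "2 * (\<Sum>(a, b)\<in>farey_pairs t. (int t div b) * a) = int (H t) - int t"
proof -
  let ?P = "farey_pairs t - {(0, 1)}"
  have zero_one: "(0, 1) \<in> farey_pairs t" using assms by (simp add: farey_pairs_def)
  have drop_zero: "(\<Sum>(a, b)\<in>farey_pairs t. (int t div b) * a) = (\<Sum>(a, b)\<in>?P. (int t div b) * a)"
    using sum.remove[OF finite_farey_pairs zero_one, of "\<lambda>(a, b). (int t div b) * a"] by simp
  have "2 * (\<Sum>(a, b)\<in>farey_pairs t. (int t div b) * a)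
      = (\<Sum>(a, b)\<in>?P. (int t div b) * a) + (\<Sum>(a, b)\<in>?P. (int t div b) * (b - a))"
    unfolding drop_zero using sum_farey_pairs_reflect[of "\<lambda>a b. (int t div b) * a" t] by simp
  also have "\<dots> = (\<Sum>(a, b)\<in>?P. (int t div b) * b)"
    by (simp add: sum.distrib[symmetric] case_prod_beta right_diff_distrib)
  also have "\<dots> = int (H t) - int t"
    using sum.remove[OF finite_farey_pairs zero_one, of "\<lambda>(a, b). (int t div b) * b"]
    by (simp add: H_eq_sum_farey_pairs)
  finally show ?thesis .
qed

theorem proposition1:
  fixes t :: nat
  assumes "t \<ge> 1"
  shows "edge_midpoint t 1 = (real (H t), real (H t) / 2)
         \<and> snd (edge_midpoint t 1) / fst (edge_midpoint t 1) = 1 / 2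
         \<and> (even (H t) \<longleftrightarrow> even t)"
proof -
  define V where "V = (\<Sum>(a, b)\<in>farey_pairs t. (int t div b) * a)"
  have V_twice: "2 * V = int (H t) - int t"
    unfolding V_def by (rule double_vertical_sum[OF assms])
  have "real (H t) = real_of_int (\<Sum>(a, b)\<in>farey_pairs t. (int t div b) * b)"
    by (simp flip: H_eq_sum_farey_pairs)
  then have "(\<Sum>s\<in>S_set t \<inter> {0..<1}. vvec t s) = (real (H t), real_of_int V)"
    unfolding vvec_def sum_S_set_unit_interval by (simp add: sum_prod case_prod_beta V_def)
  moreover have "vvec t 1 = (real t, real t)" by (simp add: vvec_def)
  ultimately have midpoint: "edge_midpoint t 1 = (real (H t), real (H t) / 2)"
    using arg_cong[OF V_twice, of real_of_int]
    by (simp add: edge_midpoint_def edge_end_def edge_start_def midpoint_def field_simps)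
  have "V \<ge> 0"
    unfolding V_def by (rule sum_nonneg) (auto simp: farey_pairs_def pos_imp_zdiv_nonneg_iff)
  then have "H t \<ge> 1" using V_twice assms by simp
  moreover have "even (H t) \<longleftrightarrow> even t"
    using V_twice by (metis add_diff_cancel_left' diff_add_cancel even_add even_of_nat_iff dvd_triv_left)
  ultimately show ?thesis using midpoint by simp
qed

end
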